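(* Let $\mathcal P$ be a countable set and consider a discrete-time Markov process $\{Z_t\}_{t\ge0}=\{(x_t,y_t)\}_{t\ge0}$ on $\mathbb R^d_+\times\mathcal P$ defined as follows: for each $i\in\mathcal P$ there is a measurable map $f(\cdot,i):\mathbb R^d_+\to\mathbb R^d_+$; there is a measurable map $P:\mathbb R^d_+\times\mathcal P\times\mathcal P\to[0,1]$ such that for each $(x,y)$, $P_x(y,\cdot):=P(x,y,\cdot)$ is a probability on $\mathcal P$; given $(x_n,y_n)=(x,y)$, first $y_{n+1}$ is drawn according to $P_x(y,\cdot)$ and then $x_{n+1}=f(x,y_{n+1})$; the initial state $(x_0,y_0)\in\mathbb R^d_+\times\mathcal P$ is given. Assume there is a constant $L>0$ with $\|x-f(x,i)\|\le L$ for all $(x,i)\in\mathbb R^d_+\times\mathcal P$. Suppose further that there exist a bounded measurable set $C\subset\mathbb R^d_+$ and a constant $a>0$ such that $$\sum_{y'\in\mathcal P}P_x(y,y')f(x,y')-x\le -a\frac{x}{\|x\|}\quad\text{for all }(x,y)\in(\mathbb R^d_+\setminus C)\times\mathcal P.$$ Then for every $r>0$, $\sup_{t\ge0}\mathbb E[\|x_t\|^r]<\infty$.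
   Context: $\mathbb R^d_+=\{x\in\mathbb R^d:x_i\ge0\ \forall i\}$, $\|\cdot\|$ is the Euclidean norm, and vector inequalities are component-wise. *)

theory Defs
  imports "HOL-Probability.Probability"
begin

definition orthant :: "(real^'d) set" where
  "orthant = {x. \<forall>i. 0 \<le> x $ i}"

text \<open>Law of Z_t = (x_t, y_t) for the chain started at z0: given (x_n,y_n) = (x,y),
  y_{n+1} is drawn from K x y and x_{n+1} = f x y_{n+1}.  Since the mark space is
  countable and the x-update is deterministic, every Z_t has a discrete law.\<close>
primrec markov_law ::
  "(real^'d \<Rightarrow> 'p::countable \<Rightarrow> real^'d) \<Rightarrow> (real^'d \<Rightarrow> 'p \<Rightarrow> 'p pmf)
   \<Rightarrow> (real^'d) \<times> 'p \<Rightarrow> nat \<Rightarrow> ((real^'d) \<times> 'p) pmf" where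
  "markov_law f K z0 0 = return_pmf z0"
| "markov_law f K z0 (Suc n) =
     bind_pmf (markov_law f K z0 n) (\<lambda>(x, y). map_pmf (\<lambda>y'. (f x y', y')) (K x y))"

end

theory Submission
  imports Defs
begin

text \<open>Use the Lyapunov function \<open>V x = exp (\<lambda> \<parallel>x\<parallel>)\<close>. Far from the origin the drift
  condition, together with jumps of size at most \<open>L\<close>, makes the expected norm drop by at least
  \<open>a/2\<close> in one step; for small \<open>\<lambda>\<close> a second-order expansion of \<open>exp\<close> turns this into the
  geometric drift \<open>E V(x') \<le> (1 - \<lambda>a/4) V(x)\<close>, while near the origin \<open>V(x')\<close> is bounded.
  Hence \<open>sup\<^sub>t E V(x\<^sub>t) < \<infinity>\<close>, and every power \<open>\<parallel>x\<parallel>\<^sup>r\<close> is dominated by \<open>1 + c V x\<close>.\<close>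

lemma norm_le_inner_div_norm_plus:
  fixes x v :: "'a::real_inner"
  assumes jump: "norm (v - x) \<le> L" and far: "L < norm x"
  shows "norm v \<le> (v \<bullet> x) / norm x + L^2 / (2 * (norm x - L))"
proof -
  define n where "n = norm x"
  define s where "s = (v \<bullet> x) / n"
  define c where "c = L^2 / (2 * (n - L))"
  \<comment> \<open>The component \<open>s\<close> of \<open>v\<close> along \<open>x\<close> satisfies \<open>s \<ge> n - L\<close> and \<open>\<parallel>v\<parallel>\<^sup>2 \<le> s\<^sup>2 + L\<^sup>2 \<le> (s + c)\<^sup>2\<close>.\<close>
  have "L \<ge> 0" using jump norm_ge_zero order_trans by blast
  hence n: "n > 0" "n > L" using far unfolding n_def by auto
  have c0: "c \<ge> 0" unfolding c_def using n by auto
  have "(x - v) \<bullet> x \<le> norm (x - v) * norm x" by (rule norm_cauchy_schwarz)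
  also have "\<dots> \<le> L * n" using jump n by (simp add: n_def norm_minus_commute mult_right_mono)
  finally have "n * n - v \<bullet> x \<le> L * n"
    by (simp add: inner_diff_left n_def dot_square_norm power2_eq_square)
  hence s_ge: "s \<ge> n - L" unfolding s_def using n by (simp add: field_simps)
  have "(norm (v - x))^2 \<le> L^2" using jump norm_ge_zero power_mono by blast
  moreover have "(norm (v - x))^2 = (norm v)^2 - 2 * (n * s) + n^2"
    using n unfolding power2_norm_eq_inner n_def s_def
    by (simp add: inner_diff_left inner_diff_right inner_commute[of x v])
  moreover have "(s - n)^2 = s^2 - 2 * (n * s) + n^2" by (simp add: power2_diff algebra_simps)
  moreover have "(s - n)^2 \<ge> 0" by simp
  ultimately have v2: "(norm v)^2 \<le> s^2 + L^2" by linarith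
  have "L^2 = 2 * (n - L) * c" unfolding c_def using n by (simp add: field_simps)
  also have "\<dots> \<le> 2 * s * c" using s_ge c0 by (simp add: mult_right_mono)
  finally have "s^2 + L^2 \<le> (s + c)^2" by (simp add: power2_sum add_increasing)
  with v2 have "(norm v)^2 \<le> (s + c)^2" by linarith
  moreover have "0 \<le> s + c" using s_ge n c0 by linarith
  ultimately have "norm v \<le> s + c" by (rule power2_le_imp_le)
  thus ?thesis unfolding s_def c_def n_def .
qed

lemma vec_inner_left_mono:
  fixes u w x :: "real^'d"
  assumes "u \<le> w" "\<And>i. 0 \<le> x $ i"
  shows "u \<bullet> x \<le> w \<bullet> x"
  unfolding inner_vec_def using assms
  by (intro sum_mono) (auto simp: less_eq_vec_def intro: mult_right_mono)

lemma exp_le_quadratic: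
  fixes t :: real
  assumes "\<bar>t\<bar> \<le> 1"
  shows "exp t \<le> 1 + t + t^2"
proof (cases "t \<ge> 0")
  case True
  thus ?thesis using exp_bound assms by auto
next
  case False
  define s where "s = -t"
  have s: "0 < s" "s \<le> 1" using False assms by (auto simp: s_def)
  have "exp t = 1 / exp s" by (simp add: s_def exp_minus field_simps)
  also have "\<dots> \<le> 1 / (1 + s)" using s exp_ge_add_one_self[of s]
    by (intro divide_left_mono) auto
  also have "\<dots> \<le> 1 - s + s^2" using s by (simp add: field_simps power2_eq_square)
  finally show ?thesis by (simp add: s_def)
qed

lemma power_div_fact_le_exp:
  fixes t :: real
  assumes "t \<ge> 0"
  shows "t ^ n / fact n \<le> exp t"
proof -
  have "t ^ n / fact n = (\<Sum>k\<in>{n}. t ^ k /\<^sub>R fact k)" by (simp add: divide_inverse)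
  also have "\<dots> \<le> (\<Sum>k. t ^ k /\<^sub>R fact k)"
    using assms by (intro sum_le_suminf summable_exp_generic) auto
  also have "\<dots> = exp t" by (simp add: exp_def)
  finally show ?thesis .
qed

lemma powr_le_one_plus_exp:
  fixes t r lam :: real
  assumes "t \<ge> 0" "r > 0" "lam > 0"
  shows "t powr r \<le> 1 + (fact (nat \<lceil>r\<rceil>) / lam ^ nat \<lceil>r\<rceil>) * exp (lam * t)"
proof (cases "t \<le> 1")
  case True
  have "t powr r \<le> 1 powr r" using assms True by (intro powr_mono2) auto
  moreover have "0 \<le> (fact (nat \<lceil>r\<rceil>) / lam ^ nat \<lceil>r\<rceil>) * exp (lam * t)" using assms by simp
  ultimately show ?thesis by simp
next
  case False
  define N where "N = nat \<lceil>r\<rceil>"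
  have "t powr r \<le> t powr (real N)"
    using False real_nat_ceiling_ge[of r] by (intro powr_mono) (auto simp: N_def)
  also have "\<dots> = (lam * t) ^ N / lam ^ N" using False assms by (simp add: powr_realpow power_mult_distrib)
  also have "\<dots> \<le> (fact N * exp (lam * t)) / lam ^ N"
    using power_div_fact_le_exp[of "lam * t" N] assms
    by (intro divide_right_mono) (auto simp: divide_le_eq mult.commute)
  finally show ?thesis unfolding N_def by simp
qed

lemma infsum_pmf_scaleR_eq_expectation:
  fixes v :: "'a \<Rightarrow> 'b::euclidean_space"
  assumes "\<And>y. norm (v y) \<le> B"
  shows "(\<Sum>\<^sub>\<infinity>y\<in>UNIV. pmf p y *\<^sub>R v y) = measure_pmf.expectation p v"
proof -
  have "integrable (measure_pmf p) v"
    by (rule measure_pmf.integrable_const_bound[where B=B]) (use assms in auto)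
  hence summable: "integrable (count_space UNIV) (\<lambda>y. pmf p y *\<^sub>R v y)"
    unfolding measure_pmf_eq_density by (subst (asm) integrable_density) auto
  have "measure_pmf.expectation p v = (\<integral>y. pmf p y *\<^sub>R v y \<partial>count_space UNIV)"
    unfolding measure_pmf_eq_density by (subst integral_density) auto
  also have "\<dots> = (\<Sum>\<^sub>\<infinity>y\<in>UNIV. pmf p y *\<^sub>R v y)"
    unfolding infsetsum_def[symmetric]
    by (rule infsetsum_infsum) (simp add: abs_summable_on_def summable)
  finally show ?thesis ..
qed

lemma expectation_norm_le_of_inner_drift:
  fixes v :: "'p \<Rightarrow> 'a::euclidean_space"
  assumes jump: "\<And>y. norm (v y - x) \<le> L" and far: "L < norm x"
    and drift: "measure_pmf.expectation p v \<bullet> x \<le> norm x ^ 2 - a * norm x"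
  shows "measure_pmf.expectation p (\<lambda>y. norm (v y)) \<le> norm x - a + L^2 / (2 * (norm x - L))"
proof -
  define n where "n = norm x"
  define c where "c = L^2 / (2 * (n - L))"
  have "L \<ge> 0" using jump norm_ge_zero order_trans by blast
  hence n: "n > 0" using far unfolding n_def by linarith
  have "norm (v y) \<le> n + L" for y
    using jump[of y] norm_triangle_sub[of "v y" x] unfolding n_def by linarith
  hence int: "integrable (measure_pmf p) v"
    by (intro measure_pmf.integrable_const_bound[where B="n + L"]) auto
  have "measure_pmf.expectation p (\<lambda>y. norm (v y)) \<le> measure_pmf.expectation p (\<lambda>y. v y \<bullet> x / n + c)"
    using int norm_le_inner_div_norm_plus[OF jump far] unfolding n_def c_def
    by (intro integral_mono) auto
  also have "\<dots> = measure_pmf.expectation p v \<bullet> x / n + c"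
    using int by simp
  also have "\<dots> \<le> n - a + c"
    using drift n by (simp add: n_def field_simps power2_eq_square)
  finally show ?thesis unfolding n_def c_def .
qed

lemma inner_expectation_le_of_componentwise_drift:
  fixes v :: "'p \<Rightarrow> real^'d"
  assumes x: "x \<in> orthant" and bounded: "\<And>y. norm (v y) \<le> B"
    and drift: "(\<Sum>\<^sub>\<infinity>y\<in>UNIV. pmf p y *\<^sub>R v y) - x \<le> - ((a / norm x) *\<^sub>R x)"
  shows "measure_pmf.expectation p v \<bullet> x \<le> norm x ^ 2 - a * norm x"
proof -
  have "(\<Sum>\<^sub>\<infinity>y\<in>UNIV. pmf p y *\<^sub>R v y) = measure_pmf.expectation p v"
    using bounded by (rule infsum_pmf_scaleR_eq_expectation)
  hence "(measure_pmf.expectation p v - x) \<bullet> x \<le> (- ((a / norm x) *\<^sub>R x)) \<bullet> x"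
    using drift x
    by (intro vec_inner_left_mono) (auto simp: orthant_def)
  thus ?thesis
    by (simp add: inner_diff_left dot_square_norm power2_eq_square split: if_splits)
qed

lemma expectation_exp_norm_contracts:
  fixes v :: "'p \<Rightarrow> 'a::real_normed_vector"
  assumes jump: "\<And>y. norm (v y - x) \<le> L"
    and mean_drift: "measure_pmf.expectation p (\<lambda>y. norm (v y)) \<le> norm x - a / 2"
    and lam: "0 < lam" "lam * L \<le> 1" "lam * L^2 \<le> a / 4"
  shows "measure_pmf.expectation p (\<lambda>y. exp (lam * norm (v y))) \<le> (1 - lam * a / 4) * exp (lam * norm x)"
proof -
  define n where "n = norm x"
  define e where "e = exp (lam * n)"
  have e: "e > 0" by (simp add: e_def)
  have close: "\<bar>norm (v y) - n\<bar> \<le> L" for y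
    using jump[of y] norm_triangle_ineq3[of "v y" x] unfolding n_def by linarith
  have pointwise: "exp (lam * norm (v y)) \<le> e * (1 - lam * n + lam^2 * L^2) + e * lam * norm (v y)" for y
  proof -
    define t where "t = lam * (norm (v y) - n)"
    have t: "\<bar>t\<bar> \<le> lam * L" using close[of y] lam unfolding t_def by (simp add: abs_mult)
    hence "t^2 \<le> lam^2 * L^2" using power_mono[OF t abs_ge_zero, of 2] by (simp add: power_mult_distrib)
    moreover have "exp t \<le> 1 + t + t^2" using t lam by (intro exp_le_quadratic) linarith
    ultimately have "e * exp t \<le> e * (1 + t + lam^2 * L^2)" using e by simp
    moreover have "e * exp t = exp (lam * norm (v y))"
      unfolding e_def t_def by (simp add: mult_exp_exp algebra_simps)
    ultimately show ?thesis unfolding t_def by (simp add: algebra_simps)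
  qed
  have bounded: "norm (v y) \<le> n + L" for y using close[of y] by linarith
  have int_norm: "integrable (measure_pmf p) (\<lambda>y. norm (v y))"
    using bounded by (intro measure_pmf.integrable_const_bound[where B="n + L"]) auto
  have int_exp: "integrable (measure_pmf p) (\<lambda>y. exp (lam * norm (v y)))"
    using bounded lam by (intro measure_pmf.integrable_const_bound[where B="exp (lam * (n + L))"]) auto
  have "measure_pmf.expectation p (\<lambda>y. exp (lam * norm (v y))) \<le>
        measure_pmf.expectation p (\<lambda>y. e * (1 - lam * n + lam^2 * L^2) + e * lam * norm (v y))"
    using int_norm int_exp pointwise by (intro integral_mono) auto
  also have "\<dots> = e * (1 - lam * n + lam^2 * L^2) + e * lam * measure_pmf.expectation p (\<lambda>y. norm (v y))"
    using int_norm by simp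
  also have "\<dots> \<le> e * (1 - lam * n + lam^2 * L^2) + e * lam * (n - a / 2)"
    using mean_drift e lam unfolding n_def by (intro add_left_mono mult_left_mono) auto
  also have "\<dots> = e * (1 - lam * a / 2 + lam * (lam * L^2))" by (simp add: algebra_simps power2_eq_square)
  also have "\<dots> \<le> e * (1 - lam * a / 2 + lam * (a / 4))"
    using e lam by (intro mult_left_mono add_left_mono) auto
  also have "\<dots> = (1 - lam * a / 4) * exp (lam * norm x)" by (simp add: e_def n_def algebra_simps)
  finally show ?thesis .
qed

lemma expectation_norm_decreases_far_out:
  fixes v :: "'p \<Rightarrow> real^'d"
  assumes x: "x \<in> orthant" and jump: "\<And>y. norm (v y - x) \<le> L" and a: "a > 0"
    and far: "L + L^2 / a < norm x"
    and drift: "(\<Sum>\<^sub>\<infinity>y\<in>UNIV. pmf p y *\<^sub>R v y) - x \<le> - ((a / norm x) *\<^sub>R x)"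
  shows "measure_pmf.expectation p (\<lambda>y. norm (v y)) \<le> norm x - a / 2"
proof -
  have "L^2 / a \<ge> 0" using a by simp
  hence far': "L < norm x" using far by linarith
  have "norm (v y) \<le> norm x + L" for y
    using jump[of y] norm_triangle_sub[of "v y" x] by linarith
  hence "measure_pmf.expectation p v \<bullet> x \<le> norm x ^ 2 - a * norm x"
    using x drift by (intro inner_expectation_le_of_componentwise_drift)
  hence "measure_pmf.expectation p (\<lambda>y. norm (v y)) \<le> norm x - a + L^2 / (2 * (norm x - L))"
    using jump far' by (intro expectation_norm_le_of_inner_drift)
  moreover have "L^2 / (2 * (norm x - L)) \<le> a / 2"
  proof -
    have "L^2 \<le> a * (norm x - L)" using far a by (simp add: field_simps)
    thus ?thesis using far' by (simp add: field_simps)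
  qed
  ultimately show ?thesis by linarith
qed

lemma exp_norm_geometric_drift:
  fixes f :: "real^'d \<Rightarrow> 'p \<Rightarrow> real^'d" and K :: "real^'d \<Rightarrow> 'p \<Rightarrow> 'p pmf"
  assumes L: "L > 0" "\<And>x i. x \<in> orthant \<Longrightarrow> norm (x - f x i) \<le> L"
    and C: "bounded C" and a: "a > 0"
    and drift: "\<And>x y. x \<in> orthant - C \<Longrightarrow>
       (\<Sum>\<^sub>\<infinity>y'\<in>UNIV. pmf (K x y) y' *\<^sub>R f x y') - x \<le> - ((a / norm x) *\<^sub>R x)"
  obtains lam rho b where "0 < lam" "0 \<le> rho" "rho < 1" "0 \<le> b"
    "\<And>x y. x \<in> orthant \<Longrightarrow>
       (\<integral>\<^sup>+ y'. ennreal (exp (lam * norm (f x y'))) \<partial>K x y) \<le> ennreal (rho * exp (lam * norm x) + b)"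
proof -
  obtain M where M: "\<And>x. x \<in> C \<Longrightarrow> norm x \<le> M" using C unfolding bounded_iff by blast
  define R where "R = max M (L + L^2 / a)"
  define lam where "lam = min (1 / L) (a / (4 * L^2))"
  define rho where "rho = max 0 (1 - lam * a / 4)"
  define b where "b = exp (lam * (R + L))"
  have lam: "0 < lam" "lam * L \<le> 1" "lam * L^2 \<le> a / 4"
    using L a by (auto simp: lam_def min_def field_simps)
  have rho: "0 \<le> rho" "rho < 1" using lam a by (auto simp: rho_def)
  have bounded: "norm (f x y') \<le> norm x + L" if "x \<in> orthant" for x y'
    using L(2)[OF that, of y'] norm_triangle_sub[of "f x y'" x] by (simp add: norm_minus_commute)
  have expectation_le:
    "measure_pmf.expectation (K x y) (\<lambda>y'. exp (lam * norm (f x y'))) \<le> rho * exp (lam * norm x) + b"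
    if x: "x \<in> orthant" for x y
  proof (cases "norm x \<le> R")
    case True
    have "exp (lam * norm (f x y')) \<le> b" for y'
      using bounded[OF x, of y'] True lam by (auto simp: b_def intro!: mult_left_mono)
    hence "measure_pmf.expectation (K x y) (\<lambda>y'. exp (lam * norm (f x y'))) \<le> b"
      by (intro measure_pmf.integral_le_const) (auto intro!: measure_pmf.integrable_const_bound[where B=b])
    thus ?thesis using rho by (simp add: add_increasing)
  next
    case False
    hence "x \<in> orthant - C" and far: "L + L^2 / a < norm x" using x M by (force simp: R_def)+
    hence "measure_pmf.expectation (K x y) (\<lambda>y'. norm (f x y')) \<le> norm x - a / 2"
      using x L(2) a drift by (intro expectation_norm_decreases_far_out) (auto simp: norm_minus_commute)
    hence "measure_pmf.expectation (K x y) (\<lambda>y'. exp (lam * norm (f x y')))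
        \<le> (1 - lam * a / 4) * exp (lam * norm x)"
      using L(2)[OF x] lam by (intro expectation_exp_norm_contracts) (auto simp: norm_minus_commute)
    also have "\<dots> \<le> rho * exp (lam * norm x) + b"
      unfolding rho_def b_def by (intro add_increasing2 mult_right_mono) auto
    finally show ?thesis .
  qed
  show ?thesis
  proof (rule that[OF lam(1) rho])
    show "0 \<le> b" by (simp add: b_def)
  next
    fix x :: "real^'d" and y :: 'p
    assume x: "x \<in> orthant"
    have "integrable (measure_pmf (K x y)) (\<lambda>y'. exp (lam * norm (f x y')))"
      using bounded[OF x] lam
      by (intro measure_pmf.integrable_const_bound[where B="exp (lam * (norm x + L))"])
         (auto intro!: mult_left_mono)
    thus "(\<integral>\<^sup>+ y'. ennreal (exp (lam * norm (f x y'))) \<partial>K x y)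
        \<le> ennreal (rho * exp (lam * norm x) + b)"
      using expectation_le[OF x] by (simp add: nn_integral_eq_integral ennreal_leI)
  qed
qed

lemma set_pmf_markov_law_subset:
  assumes invariant: "\<And>x i. x \<in> S \<Longrightarrow> f x i \<in> S" and x0: "x0 \<in> S"
  shows "set_pmf (markov_law f K (x0, y0) n) \<subseteq> S \<times> UNIV"
proof (induction n)
  case 0
  show ?case using x0 by simp
next
  case (Suc n)
  thus ?case using invariant by (auto simp: case_prod_unfold)
qed

lemma markov_law_lyapunov_bound:
  fixes V :: "real^'d \<Rightarrow> real" and K :: "real^'d \<Rightarrow> 'p::countable \<Rightarrow> 'p pmf"
  assumes invariant: "\<And>x i. x \<in> S \<Longrightarrow> f x i \<in> S" and x0: "x0 \<in> S"
    and V: "\<And>x. 0 \<le> V x" and rho: "0 \<le> rho" "rho < 1" and b: "0 \<le> b"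
    and step: "\<And>x y. x \<in> S \<Longrightarrow>
      (\<integral>\<^sup>+ y'. ennreal (V (f x y')) \<partial>measure_pmf (K x y)) \<le> ennreal (rho * V x + b)"
  shows "(\<integral>\<^sup>+ z. ennreal (V (fst z)) \<partial>measure_pmf (markov_law f K (x0, y0) t))
    \<le> ennreal (V x0 + b / (1 - rho))"
proof (induction t)
  case 0
  show ?case using rho b by (simp add: ennreal_leI)
next
  case (Suc t)
  define B where "B = V x0 + b / (1 - rho)"
  define Mt where "Mt = markov_law f K (x0, y0) t"
  have "(\<integral>\<^sup>+ z. ennreal (V (fst z)) \<partial>measure_pmf (markov_law f K (x0, y0) (Suc t)))
      = (\<integral>\<^sup>+ z. (\<integral>\<^sup>+ y'. ennreal (V (f (fst z) y')) \<partial>measure_pmf (K (fst z) (snd z))) \<partial>measure_pmf Mt)"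
    by (simp add: Mt_def case_prod_unfold)
  also have "\<dots> \<le> (\<integral>\<^sup>+ z. ennreal rho * ennreal (V (fst z)) + ennreal b \<partial>measure_pmf Mt)"
  proof (intro nn_integral_mono_AE AE_pmfI)
    fix z
    assume "z \<in> set_pmf Mt"
    moreover have "set_pmf Mt \<subseteq> S \<times> UNIV"
      unfolding Mt_def by (rule set_pmf_markov_law_subset) (use invariant x0 in auto)
    ultimately have "fst z \<in> S" by (auto simp: mem_Times_iff)
    from step[OF this, of "snd z"]
    show "(\<integral>\<^sup>+ y'. ennreal (V (f (fst z) y')) \<partial>measure_pmf (K (fst z) (snd z)))
        \<le> ennreal rho * ennreal (V (fst z)) + ennreal b"
      using rho b V by (simp add: ennreal_mult ennreal_plus)
  qed
  also have "\<dots> = ennreal rho * (\<integral>\<^sup>+ z. ennreal (V (fst z)) \<partial>measure_pmf Mt) + ennreal b"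
    by (simp add: nn_integral_add nn_integral_cmult measure_pmf.emeasure_space_1)
  also have "\<dots> \<le> ennreal rho * ennreal B + ennreal b"
    using Suc.IH unfolding Mt_def B_def by (intro add_right_mono mult_left_mono) auto
  also have "\<dots> = ennreal (rho * B + b)"
    using rho b V[of x0] unfolding B_def by (simp add: ennreal_mult ennreal_plus)
  also have "\<dots> \<le> ennreal B"
  proof (rule ennreal_leI)
    have "(1 - rho) * B = (1 - rho) * V x0 + b" using rho by (simp add: B_def field_simps)
    moreover have "rho * V x0 \<le> V x0" using rho V[of x0] by (simp add: mult_left_le_one_le)
    ultimately show "rho * B + b \<le> B" by (simp add: algebra_simps)
  qed
  finally show ?case unfolding B_def .
qed

lemma nn_integral_powr_le_exp_moment:
  fixes g :: "'a \<Rightarrow> real"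
  assumes g: "\<And>z. 0 \<le> g z" and r: "0 < r" and lam: "0 < lam"
  shows "(\<integral>\<^sup>+ z. ennreal (g z powr r) \<partial>measure_pmf p)
    \<le> 1 + ennreal (fact (nat \<lceil>r\<rceil>) / lam ^ nat \<lceil>r\<rceil>) * (\<integral>\<^sup>+ z. ennreal (exp (lam * g z)) \<partial>measure_pmf p)"
proof -
  define c where "c = fact (nat \<lceil>r\<rceil>) / lam ^ nat \<lceil>r\<rceil>"
  have c: "0 \<le> c" using lam by (simp add: c_def)
  have "(\<integral>\<^sup>+ z. ennreal (g z powr r) \<partial>measure_pmf p)
      \<le> (\<integral>\<^sup>+ z. 1 + ennreal c * ennreal (exp (lam * g z)) \<partial>measure_pmf p)"
  proof (rule nn_integral_mono)
    fix z
    have "ennreal (g z powr r) \<le> ennreal (1 + c * exp (lam * g z))"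
      using powr_le_one_plus_exp[OF g r lam] unfolding c_def by (rule ennreal_leI)
    thus "ennreal (g z powr r) \<le> 1 + ennreal c * ennreal (exp (lam * g z))"
      using c by (simp add: ennreal_plus ennreal_mult)
  qed
  also have "\<dots> = 1 + ennreal c * (\<integral>\<^sup>+ z. ennreal (exp (lam * g z)) \<partial>measure_pmf p)"
    by (simp add: nn_integral_add nn_integral_cmult measure_pmf.emeasure_space_1)
  finally show ?thesis unfolding c_def .
qed

theorem proposition8:
  fixes f :: "real^'d \<Rightarrow> 'p::countable \<Rightarrow> real^'d"
    and K :: "real^'d \<Rightarrow> 'p \<Rightarrow> 'p pmf"
    and x0 :: "real^'d" and y0 :: 'p
    and L a :: real and C :: "(real^'d) set"
  assumes f_orthant: "\<And>x i. x \<in> orthant \<Longrightarrow> f x i \<in> orthant"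
    and f_meas: "\<And>i. (\<lambda>x. f x i) \<in> borel_measurable (restrict_space borel orthant)"
    and K_meas: "\<And>y y'. (\<lambda>x. pmf (K x y) y') \<in> borel_measurable (restrict_space borel orthant)"
    and x0: "x0 \<in> orthant"
    and L: "L > 0" "\<And>x i. x \<in> orthant \<Longrightarrow> norm (x - f x i) \<le> L"
    and C: "C \<in> sets borel" "bounded C" "C \<subseteq> orthant"
    and a: "a > 0"
    and drift: "\<And>x y. x \<in> orthant - C \<Longrightarrow>
       (\<Sum>\<^sub>\<infinity>y'\<in>UNIV. pmf (K x y) y' *\<^sub>R f x y') - x \<le> - ((a / norm x) *\<^sub>R x)"
  shows "\<forall>r > 0. (SUP t. \<integral>\<^sup>+ z. ennreal (norm (fst z) powr r) \<partial>measure_pmf (markov_law f K (x0, y0) t)) < \<infinity>"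
proof (intro allI impI)
  fix r :: real
  assume r: "r > 0"
  obtain lam rho b where lam: "0 < lam" and rho: "0 \<le> rho" "rho < 1" and b: "0 \<le> b"
    and step: "\<And>x y. x \<in> orthant \<Longrightarrow>
       (\<integral>\<^sup>+ y'. ennreal (exp (lam * norm (f x y'))) \<partial>K x y) \<le> ennreal (rho * exp (lam * norm x) + b)"
    using exp_norm_geometric_drift[where f=f and K=K, OF L C(2) a drift] by blast
  define B where "B = exp (lam * norm x0) + b / (1 - rho)"
  define c where "c = fact (nat \<lceil>r\<rceil>) / lam ^ nat \<lceil>r\<rceil>"
  have "(\<integral>\<^sup>+ z. ennreal (norm (fst z) powr r) \<partial>measure_pmf (markov_law f K (x0, y0) t))
      \<le> 1 + ennreal c * ennreal B" for t
  proof -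
    have "(\<integral>\<^sup>+ z. ennreal (norm (fst z) powr r) \<partial>measure_pmf (markov_law f K (x0, y0) t))
        \<le> 1 + ennreal c * (\<integral>\<^sup>+ z. ennreal (exp (lam * norm (fst z))) \<partial>measure_pmf (markov_law f K (x0, y0) t))"
      unfolding c_def using r lam by (intro nn_integral_powr_le_exp_moment) auto
    also have "\<dots> \<le> 1 + ennreal c * ennreal B"
      unfolding B_def using markov_law_lyapunov_bound[OF f_orthant x0 _ rho b step]
      by (intro add_left_mono mult_left_mono) auto
    finally show ?thesis .
  qed
  hence "(SUP t. \<integral>\<^sup>+ z. ennreal (norm (fst z) powr r) \<partial>measure_pmf (markov_law f K (x0, y0) t))
      \<le> 1 + ennreal c * ennreal B"
    by (rule SUP_least)
  also have "\<dots> < \<infinity>" by (simp add: ennreal_mult_less_top)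
  finally show "(SUP t. \<integral>\<^sup>+ z. ennreal (norm (fst z) powr r)
      \<partial>measure_pmf (markov_law f K (x0, y0) t)) < \<infinity>" .
qed

end
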